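(* Let $a,b\in\mathbb{C}$ with $b\neq0$, and suppose $\cdot_\lambda\cdot$ is a compatible left-symmetric conformal algebraic structure on $\mathcal{W}(a,b)=\mathbb{C}[\partial]L\oplus\mathbb{C}[\partial]W$ such that $\mathbb{C}[\partial]L$ is a left-symmetric conformal subalgebra. Let $c\in\mathbb{C}$ with $L_\lambda L=(\partial+\lambda+c)L$, and write $L_\lambda W=g_1L+g_2W$, $W_\lambda L=h_1L+h_2W$, $W_\lambda W=k_1L+k_2W$ with $g_i,h_i,k_i\in\mathbb{C}[\lambda,\partial]$. Assume $c\neq0$, $g_2(\lambda,\partial)=\partial+a\lambda+b+c$ and $h_2(\lambda,\partial)=c$. Then one of the following holds: (B1) $h_1=g_1=k_1=k_2=0$ (and $g_2=\partial+a\lambda+b+c$, $h_2=c$); (B2) $a=1$, $c=b$, $g_2=\partial+\lambda+2b$, $h_2=b$, $g_1=h_1=d$, $k_1=-\frac{d^2}{b}$, $k_2=-d$, for some constant $d\in\mathbb{C}\setminus\{0\}$.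
   Context: A conformal algebra is a $\mathbb{C}[\partial]$-module $R$ with a $\mathbb{C}$-bilinear map $R\times R\to R[\lambda]$, $(x,y)\mapsto x_\lambda y$, satisfying $(\partial x)_\lambda y=-\lambda\, x_\lambda y$ and $x_\lambda(\partial y)=(\partial+\lambda)\,x_\lambda y$. For $x,y\in R$, $y_{-\lambda-\partial}x$ means: write $y_\mu x=\sum_j \mu^j z_j$ and set $y_{-\lambda-\partial}x=\sum_j(-\lambda-\partial)^j z_j$. A left-symmetric conformal algebra is a conformal algebra with $(x_\lambda y)_{\lambda+\mu}z-x_\lambda(y_\mu z)=(y_\mu x)_{\lambda+\mu}z-y_\mu(x_\lambda z)$. A compatible left-symmetric conformal algebraic structure on a Lie conformal algebra $(R,[\cdot_\lambda\cdot])$ is a left-symmetric conformal product on the same $\mathbb{C}[\partial]$-module with $x_\lambda y-y_{-\lambda-\partial}x=[x_\lambda y]$ for all $x,y$. $\mathcal{W}(a,b)$ is the free $\mathbb{C}[\partial]$-module with basis $L,W$ and Lie conformal brackets $[L_\lambda L]=(\partial+2\lambda)L$, $[L_\lambda W]=(\partial+a\lambda+b)W$, $[W_\lambda W]=0$. "$\mathbb{C}[\partial]L$ is a left-symmetric conformal subalgebra" means $L_\lambda L\in(\mathbb{C}[\partial]L)[\lambda]$; in that case $L_\lambda L=(\partial+\lambda+c)L$ for some $c\in\mathbb{C}$. *)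

theory Defs
  imports "HOL-Computational_Algebra.Polynomial"
begin

datatype gen = GL | GW

definition bipoly :: "(complex \<Rightarrow> complex \<Rightarrow> complex) \<Rightarrow> bool" where
  "bipoly f \<longleftrightarrow> (\<exists>n (c::nat \<Rightarrow> nat \<Rightarrow> complex).
      \<forall>x y. f x y = (\<Sum>i\<le>n. \<Sum>j\<le>n. c i j * x ^ i * y ^ j))"

text \<open>A lambda-product on the free module C[\<partial>]L + C[\<partial>]W is determined by a
  table T: T u v w lam d is the coefficient (a polynomial in lambda, partial) of the
  generator w in u_lambda v.  Elements are given by coefficient functions
  X :: gen => (complex => complex) (the coefficient of each generator, as a function of
  partial).  The product of general elements is obtained by conformal sesquilinearity:
  (p(\<partial>)u)_lam (q(\<partial>)v) = p(-lam) q(\<partial>+lam) u_lam v.\<close>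
definition lprod ::
  "(gen \<Rightarrow> gen \<Rightarrow> gen \<Rightarrow> complex \<Rightarrow> complex \<Rightarrow> complex) \<Rightarrow>
   (gen \<Rightarrow> complex \<Rightarrow> complex) \<Rightarrow> (gen \<Rightarrow> complex \<Rightarrow> complex) \<Rightarrow>
   complex \<Rightarrow> complex \<Rightarrow> gen \<Rightarrow> complex" where
  "lprod T X Y lam d w =
     (\<Sum>u\<in>{GL, GW}. \<Sum>v\<in>{GL, GW}. X u (- lam) * Y v (d + lam) * T u v w lam d)"

definition coef :: "(gen \<Rightarrow> complex poly) \<Rightarrow> gen \<Rightarrow> complex \<Rightarrow> complex" where
  "coef x u t = poly (x u) t"

definition left_symmetric :: "(gen \<Rightarrow> gen \<Rightarrow> gen \<Rightarrow> complex \<Rightarrow> complex \<Rightarrow> complex) \<Rightarrow> bool" where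
  "left_symmetric T \<longleftrightarrow>
    (\<forall>(x::gen \<Rightarrow> complex poly) y z lam mu d w.
       lprod T (\<lambda>u t. lprod T (coef x) (coef y) lam t u) (coef z) (lam + mu) d w
       - lprod T (coef x) (\<lambda>v t. lprod T (coef y) (coef z) mu t v) lam d w
     = lprod T (\<lambda>u t. lprod T (coef y) (coef x) mu t u) (coef z) (lam + mu) d w
       - lprod T (coef y) (\<lambda>v t. lprod T (coef x) (coef z) lam t v) mu d w)"

text \<open>Bracket table of the Lie conformal algebra W(a,b):
  [L_lam L] = (\<partial>+2lam)L, [L_lam W] = (\<partial>+a lam+b)W, [W_lam W] = 0, and by skew-symmetry
  [W_lam L] = -[L_(-lam-\<partial>) W] = -(\<partial> + a(-lam-\<partial>) + b) W.\<close>
definition Wab :: "complex \<Rightarrow> complex \<Rightarrow> gen \<Rightarrow> gen \<Rightarrow> gen \<Rightarrow> complex \<Rightarrow> complex \<Rightarrow> complex" where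
  "Wab a b u v w lam d =
     (case (u, v, w) of
        (GL, GL, GL) \<Rightarrow> d + 2 * lam
      | (GL, GW, GW) \<Rightarrow> d + a * lam + b
      | (GW, GL, GW) \<Rightarrow> - (d + a * (- lam - d) + b)
      | _ \<Rightarrow> 0)"

definition compatible :: "complex \<Rightarrow> complex \<Rightarrow> (gen \<Rightarrow> gen \<Rightarrow> gen \<Rightarrow> complex \<Rightarrow> complex \<Rightarrow> complex) \<Rightarrow> bool" where
  "compatible a b T \<longleftrightarrow>
    (\<forall>(x::gen \<Rightarrow> complex poly) y lam d w.
       lprod T (coef x) (coef y) lam d w - lprod T (coef y) (coef x) (- lam - d) d w
       = lprod (Wab a b) (coef x) (coef y) lam d w)"

end

theory Submission imports Defs begin

text \<open>Write \<open>g\<^sub>1, h\<^sub>1, k\<^sub>1, k\<^sub>2\<close> for the unknown coefficients and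
  \<open>\<phi>(\<partial>) = g\<^sub>1(0, \<partial>)\<close>. Compatibility gives \<open>h\<^sub>1(\<lambda>, \<partial>) = g\<^sub>1(-\<lambda>-\<partial>, \<partial>)\<close>
  and the symmetry \<open>k\<^sub>2(\<lambda>, \<partial>) = k\<^sub>2(-\<lambda>-\<partial>, \<partial>)\<close>. Left-symmetry on the triples
  \<open>(L,L,W)\<close>, \<open>(L,W,L)\<close> and \<open>(L,W,W)\<close>, evaluated at suitable points, expresses
  \<open>g\<^sub>1\<close> and \<open>k\<^sub>2\<close> through \<open>\<phi>\<close>; the symmetry of \<open>k\<^sub>2\<close> then forces \<open>\<phi>\<close> to be a
  constant \<open>d\<close>, and \<open>b g\<^sub>1 = c d\<close>, \<open>b k\<^sub>2 = -c d\<close>. Either \<open>d = 0\<close> and everything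
  vanishes, or comparing \<open>b g\<^sub>1 = c d\<close> at \<open>\<lambda> = 0\<close> gives \<open>c = b\<close>, a shift identity for
  \<open>\<phi>\<close> gives \<open>a = 1\<close>, and the \<open>L\<close>-component of the \<open>(L,W,W)\<close> identity gives
  \<open>k\<^sub>1 = -d\<^sup>2/b\<close>. All identities hold pointwise, so the polynomiality of the
  coefficients is never used.\<close>

definition basis :: "gen \<Rightarrow> gen \<Rightarrow> complex poly" where
  "basis g = (\<lambda>u. if u = g then 1 else 0)"

lemma coef_basis: "coef (basis g) u t = (if u = g then 1 else 0)"
  by (simp add: coef_def basis_def)

lemma lprod_basis_left:
  "lprod T (coef (basis p)) Y lam d w = (\<Sum>v\<in>{GL, GW}. Y v (d + lam) * T p v w lam d)"
  by (cases p) (simp_all add: lprod_def coef_basis)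

lemma lprod_basis_right:
  "lprod T X (coef (basis q)) lam d w = (\<Sum>u\<in>{GL, GW}. X u (- lam) * T u q w lam d)"
  by (cases q) (simp_all add: lprod_def coef_basis)

lemma lprod_basis: "lprod T (coef (basis p)) (coef (basis q)) lam d w = T p q w lam d"
  by (cases q) (simp_all add: lprod_basis_left coef_basis)

lemma left_symmetric_basis:
  assumes "left_symmetric T"
  shows "(\<Sum>u\<in>{GL, GW}. T p q u lam (- (lam + mu)) * T u r w (lam + mu) d)
           - (\<Sum>v\<in>{GL, GW}. T q r v mu (d + lam) * T p v w lam d)
       = (\<Sum>u\<in>{GL, GW}. T q p u mu (- (lam + mu)) * T u r w (lam + mu) d)
           - (\<Sum>v\<in>{GL, GW}. T p r v lam (d + mu) * T q v w mu d)"
  using assms[unfolded left_symmetric_def, rule_format,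
      where x = "basis p" and y = "basis q" and z = "basis r"]
  unfolding lprod_basis by (simp only: lprod_basis_left lprod_basis_right)

lemma compatible_basis:
  assumes "compatible a b T"
  shows "T p q w lam d - T q p w (- lam - d) d = Wab a b p q w lam d"
  using assms[unfolded compatible_def, rule_format, where x = "basis p" and y = "basis q"]
  by (simp only: lprod_basis)

locale W_lsca_L_subalgebra =
  fixes a b c :: complex
    and T :: "gen \<Rightarrow> gen \<Rightarrow> gen \<Rightarrow> complex \<Rightarrow> complex \<Rightarrow> complex"
  assumes lsym: "left_symmetric T"
    and compat: "compatible a b T"
    and sub_L: "T GL GL GW lam d = 0"
    and LL: "T GL GL GL lam d = d + lam + c"
    and g2: "T GL GW GW lam d = d + a * lam + b + c"
    and h2: "T GW GL GW lam d = c"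
begin

lemma h1_via_g1: "T GW GL GL lam d = T GL GW GL (- lam - d) d"
  using compatible_basis[OF compat, of GL GW GL "- lam - d" d] by (simp add: Wab_def)

lemma k2_symmetric: "T GW GW GW lam d = T GW GW GW (- lam - d) d"
  using compatible_basis[OF compat, of GW GW GW lam d] by (simp add: Wab_def)

lemma g1_via_phi:
  "b * T GL GW GL mu d
     = (d + a * mu + b + c) * T GL GW GL 0 d - (d + mu + c) * T GL GW GL 0 (d + mu)"
  using left_symmetric_basis[OF lsym,
      where p = GL and q = GL and r = GW and w = GL and lam = 0 and mu = mu and d = d]
  by (simp add: sub_L LL g2 h2 h1_via_g1 algebra_simps add.commute[of mu d])

lemma phi_shift:
  "(d + a * lam + b) * T GL GW GL 0 d = (d + lam + c) * T GL GW GL 0 (d + lam)"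
  using left_symmetric_basis[OF lsym,
      where p = GL and q = GW and r = GL and w = GL and lam = lam and mu = "- lam - d" and d = d]
  by (simp add: sub_L LL g2 h2 h1_via_g1 algebra_simps)

lemma k2_via_phi: "b * T GW GW GW mu d = - c * T GL GW GL 0 (d + mu)"
  using left_symmetric_basis[OF lsym,
      where p = GL and q = GW and r = GW and w = GW and lam = 0 and mu = mu and d = d]
  by (simp add: sub_L LL g2 h2 h1_via_g1 algebra_simps add.commute[of mu d] eq_neg_iff_add_eq_0)

lemma k1_relation:
  "2 * b * T GW GW GL mu d - T GL GW GL 0 d * T GW GW GW mu d
     + T GL GW GL 0 (d + mu) * T GW GL GL mu d = 0"
  using left_symmetric_basis[OF lsym,
      where p = GL and q = GW and r = GW and w = GL and lam = 0 and mu = mu and d = d]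
  by (simp add: sub_L LL g2 h2 h1_via_g1 algebra_simps add.commute[of mu d])

context
  assumes b_nz: "b \<noteq> 0" and c_nz: "c \<noteq> 0"
begin

lemma phi_constant: "T GL GW GL 0 d = T GL GW GL 0 0"
proof -
  have "- c * T GL GW GL 0 d = b * T GW GW GW 0 d"
    using k2_via_phi[of 0 d] by simp
  also have "\<dots> = b * T GW GW GW (- d) d"
    using k2_symmetric[of 0 d] by simp
  also have "\<dots> = - c * T GL GW GL 0 0"
    using k2_via_phi[of "- d" d] by simp
  finally show ?thesis using c_nz by simp
qed

lemma g1_constant: "b * T GL GW GL lam d = c * T GL GW GL 0 0"
  using g1_via_phi[of lam d] phi_shift[of d lam] phi_constant[of d] phi_constant[of "d + lam"]
  by (simp add: algebra_simps)

lemma k2_constant: "b * T GW GW GW lam d = - c * T GL GW GL 0 0"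
  using k2_via_phi[of lam d] phi_constant[of "d + lam"] by simp

lemma k1_via_constants:
  "2 * b * T GW GW GL lam d - T GL GW GL 0 0 * T GW GW GW lam d
     + T GL GW GL 0 0 * T GL GW GL (- lam - d) d = 0"
  using k1_relation[of lam d] phi_constant[of d] phi_constant[of "d + lam"]
  by (simp add: h1_via_g1)

lemma vanishing_case:
  assumes "T GL GW GL 0 0 = 0"
  shows "T GL GW GL lam d = 0" "T GW GL GL lam d = 0"
    and "T GW GW GW lam d = 0" "T GW GW GL lam d = 0"
proof -
  show g1: "T GL GW GL lam d = 0" for lam d
    using g1_constant[of lam d] assms b_nz by simp
  then show "T GW GL GL lam d = 0" by (simp add: h1_via_g1)
  show "T GW GW GW lam d = 0" using k2_constant[of lam d] assms b_nz by simp
  then show "T GW GW GL lam d = 0" using k1_via_constants[of lam d] assms b_nz by simp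
qed

lemma nonvanishing_case:
  assumes dd: "T GL GW GL 0 0 = dd" and "dd \<noteq> 0"
  shows "c = b" "a = 1" "T GL GW GL lam d = dd" "T GW GL GL lam d = dd"
    and "T GW GW GW lam d = - dd" "T GW GW GL lam d = - (dd ^ 2 / b)"
proof -
  show cb: "c = b" using g1_constant[of 0 0] assms by simp
  show "a = 1" using phi_shift[of 0 1] phi_constant[of 1] assms cb by simp
  show g1: "T GL GW GL lam d = dd" for lam d using g1_constant[of lam d] assms cb b_nz by simp
  then show "T GW GL GL lam d = dd" by (simp add: h1_via_g1)
  show k2: "T GW GW GW lam d = - dd" for lam d
    using k2_constant[of lam d] assms cb b_nz
    by (metis mult_cancel_left mult_minus_left mult_minus_right)
  have "2 * (b * T GW GW GL lam d + dd ^ 2) = 0"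
    using k1_via_constants[of lam d] g1 k2 dd by (simp add: algebra_simps power2_eq_square)
  then have "b * T GW GW GL lam d + dd ^ 2 = 0"
    by (metis mult_eq_0_iff zero_neq_numeral)
  then show "T GW GW GL lam d = - (dd ^ 2 / b)"
    using b_nz by (simp add: field_simps eq_neg_iff_add_eq_0)
qed

end

end

theorem lemma3p3:
  fixes a b c :: complex
    and T :: "gen \<Rightarrow> gen \<Rightarrow> gen \<Rightarrow> complex \<Rightarrow> complex \<Rightarrow> complex"
  assumes b_nz: "b \<noteq> 0"
    and poly_T: "\<And>u v w. bipoly (T u v w)"
    and lsym: "left_symmetric T"
    and compat: "compatible a b T"
    and sub_L: "\<And>lam d. T GL GL GW lam d = 0"
    and LL: "\<And>lam d. T GL GL GL lam d = d + lam + c"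
    and c_nz: "c \<noteq> 0"
    and g2: "\<And>lam d. T GL GW GW lam d = d + a * lam + b + c"
    and h2: "\<And>lam d. T GW GL GW lam d = c"
  shows "((\<forall>lam d. T GW GL GL lam d = 0 \<and> T GL GW GL lam d = 0
                  \<and> T GW GW GL lam d = 0 \<and> T GW GW GW lam d = 0)
          \<and> (\<forall>lam d. T GL GW GW lam d = d + a * lam + b + c \<and> T GW GL GW lam d = c))
       \<or> (a = 1 \<and> c = b \<and>
          (\<exists>dd::complex. dd \<noteq> 0 \<and>
            (\<forall>lam d. T GL GW GW lam d = d + lam + 2 * b
                   \<and> T GW GL GW lam d = b
                   \<and> T GL GW GL lam d = dd \<and> T GW GL GL lam d = dd
                   \<and> T GW GW GL lam d = - (dd ^ 2 / b)
                   \<and> T GW GW GW lam d = - dd)))"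
proof -
  interpret W_lsca_L_subalgebra a b c T
    using lsym compat sub_L LL g2 h2 by unfold_locales
  show ?thesis
  proof (cases "T GL GW GL 0 0 = 0")
    case True
    then show ?thesis using vanishing_case[OF b_nz c_nz] g2 h2 by simp
  next
    case False
    show ?thesis
      using False nonvanishing_case[OF b_nz c_nz refl False] g2 h2
      by (intro disjI2 conjI exI[of _ "T GL GW GL 0 0"]) simp_all
  qed
qed

end
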